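(* Let $V$ be a finite dimensional real vector space and $n\in\mathbb N$. For $1\le k\le n$ let $\Gamma_k$ be a finitely generated cone in $V$ and $B_k$ a compact subset of $V$. Then there exists a compact subset $B$ of $V$ such that $$\bigcap_{k=1}^n(B_k+\Gamma_k)\subseteq B+\bigcap_{k=1}^n\Gamma_k.$$
   Context: A cone $\Gamma\subseteq V$ is finitely generated if there are finitely many $\omega_1,\dots,\omega_m\in V$ with $\Gamma=\sum_{j=1}^m\mathbb R_{\ge0}\omega_j$. *)

theory Defs
  imports "HOL-Analysis.Analysis"
begin

definition finitely_generated_cone :: "'a::real_vector set \<Rightarrow> bool" where
  "finitely_generated_cone C \<longleftrightarrow>
     (\<exists>m::nat. \<exists>\<omega>::nat \<Rightarrow> 'a.
        C = {x. \<exists>c::nat \<Rightarrow> real. (\<forall>j<m. c j \<ge> 0) \<and> x = (\<Sum>j<m. c j *\<^sub>R \<omega> j)})"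

end

theory Submission
  imports Defs
begin

(* Every finitely generated cone is polyhedral, Gamma_k = {x. a . x <= 0 for all a in A_k}
   with A_k finite.  With A the union of the A_k, the intersection of the Gamma_k is the
   cone P = {x. a . x <= 0 for all a in A}, and if all B_k lie in the ball of radius M, every
   point x of the intersection of the B_k + Gamma_k satisfies a . x <= r := M max |a| for all
   a in A.  It remains to see Hoffman's bound: such an x lies within a fixed distance R of P.
   If y is the point of P nearest to x, then x - y lies in the normal cone of P at y, which by
   Farkas' lemma is generated by the constraints a with a . y = 0; and on the cone generated
   by any subset J of A the inequalities a . v <= r (a in J) confine v to a bounded set,
   by compactness of the unit sphere. *)

lemma convex_cone_sum:
  assumes "convex_cone K" "\<And>i. i \<in> I \<Longrightarrow> f i \<in> K"
  shows "sum f I \<in> K"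
proof (cases "finite I")
  case True
  then show ?thesis using assms(2)
    by (induction I rule: finite_induct) (auto simp: assms(1) convex_cone_add convex_cone_contains_0)
qed (simp add: assms(1) convex_cone_contains_0)

lemma nonneg_combinations_eq_convex_cone_hull:
  fixes \<omega> :: "nat \<Rightarrow> 'a::real_vector"
  shows "{x. \<exists>c::nat \<Rightarrow> real. (\<forall>j<m. c j \<ge> 0) \<and> x = (\<Sum>j<m. c j *\<^sub>R \<omega> j)}
           = convex_cone hull (\<omega> ` {..<m})"
  (is "?G = ?H")
proof
  show "?G \<subseteq> ?H"
  proof
    fix x assume "x \<in> ?G"
    then obtain c where c: "\<forall>j<m. 0 \<le> c j" and x: "x = (\<Sum>j<m. c j *\<^sub>R \<omega> j)"
      by blast
    show "x \<in> ?H"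
      unfolding x by (rule convex_cone_sum[OF convex_cone_convex_cone_hull])
        (use c in \<open>auto intro: convex_cone_hull_mul hull_inc\<close>)
  qed
  show "?H \<subseteq> ?G"
  proof (rule hull_minimal)
    show "\<omega> ` {..<m} \<subseteq> ?G"
    proof (rule image_subsetI)
      fix i assume "i \<in> {..<m}"
      then have "\<omega> i = (\<Sum>j<m. (if j = i then 1 else 0) *\<^sub>R \<omega> j)"
        by (simp add: if_distrib[of "\<lambda>c. c *\<^sub>R _"] cong: if_cong)
      then show "\<omega> i \<in> ?G"
        by (intro CollectI exI[of _ "\<lambda>j. if j = i then 1 else 0"]) auto
    qed
    show "convex_cone ?G"
      unfolding convex_cone_iff
    proof (intro conjI ballI allI impI)
      show "0 \<in> ?G"
        by (intro CollectI exI[of _ "\<lambda>j. 0"]) auto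
    next
      fix x y assume "x \<in> ?G" "y \<in> ?G"
      then obtain c d where "\<forall>j<m. c j \<ge> 0" "x = (\<Sum>j<m. c j *\<^sub>R \<omega> j)"
                        and "\<forall>j<m. d j \<ge> 0" "y = (\<Sum>j<m. d j *\<^sub>R \<omega> j)"
        by blast
      then show "x + y \<in> ?G"
        by (intro CollectI exI[of _ "\<lambda>j. c j + d j"]) (auto simp: sum.distrib scaleR_add_left)
    next
      fix x and t :: real assume "x \<in> ?G" "0 \<le> t"
      then obtain c where "\<forall>j<m. c j \<ge> 0" "x = (\<Sum>j<m. c j *\<^sub>R \<omega> j)"
        by blast
      with \<open>0 \<le> t\<close> show "t *\<^sub>R x \<in> ?G"
        by (intro CollectI exI[of _ "\<lambda>j. t * c j"]) (auto simp: scaleR_sum_right)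
    qed
  qed
qed

lemma polyhedral_convex_cone_eq_halfspaces:
  fixes C :: "'a::euclidean_space set"
  assumes "polyhedron C" "convex_cone C"
  shows "\<exists>A. finite A \<and> C = {x. \<forall>a\<in>A. a \<bullet> x \<le> 0}"
proof -
  obtain F a b where "finite F" and C: "C = \<Inter>F"
    and F: "\<And>h. h \<in> F \<Longrightarrow> h = {x. a h \<bullet> x \<le> b h}"
    using assms(1) unfolding polyhedron_def by metis
  have mem_F: "x \<in> h \<longleftrightarrow> a h \<bullet> x \<le> b h" if "h \<in> F" for h x
    using F[OF that] by blast
  have b_nonneg: "0 \<le> b h" if "h \<in> F" for h
    using convex_cone_contains_0[OF assms(2)] C mem_F[OF that] that by auto
  have "a h \<bullet> x \<le> 0" if "h \<in> F" "x \<in> C" for h x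
  proof (rule ccontr)
    assume "\<not> a h \<bullet> x \<le> 0"
    then have pos: "0 < a h \<bullet> x" by simp
    define t where "t = (b h + 1) / (a h \<bullet> x)"
    have "t *\<^sub>R x \<in> h"
      using convex_cone_scaleR[OF assms(2) _ \<open>x \<in> C\<close>, of t] pos b_nonneg[OF \<open>h \<in> F\<close>] C \<open>h \<in> F\<close>
      by (auto simp: t_def)
    then have "b h + 1 \<le> b h"
      using mem_F[OF \<open>h \<in> F\<close>] pos by (simp add: t_def)
    then show False by simp
  qed
  then have "C = {x. \<forall>c\<in>a ` F. c \<bullet> x \<le> 0}"
  proof (intro equalityI subsetI)
    fix x assume "x \<in> {x. \<forall>c\<in>a ` F. c \<bullet> x \<le> 0}"
    then have "x \<in> h" if "h \<in> F" for h
      using mem_F[OF that] b_nonneg[OF that] that by auto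
    then show "x \<in> C"
      using C by blast
  qed blast
  with \<open>finite F\<close> show ?thesis
    by blast
qed

lemma finitely_generated_cone_eq_halfspaces:
  fixes C :: "'a::euclidean_space set"
  assumes "finitely_generated_cone C"
  shows "\<exists>A. finite A \<and> C = {x. \<forall>a\<in>A. a \<bullet> x \<le> 0}"
proof -
  obtain m and \<omega> :: "nat \<Rightarrow> 'a" where C: "C = convex_cone hull (\<omega> ` {..<m})"
    using assms unfolding finitely_generated_cone_def nonneg_combinations_eq_convex_cone_hull
    by blast
  show ?thesis
    unfolding C
    by (intro polyhedral_convex_cone_eq_halfspaces polyhedron_convex_cone_hull
        convex_cone_convex_cone_hull finite_imageI finite_lessThan)
qed

lemma Farkas_lemma:
  fixes v :: "'a::euclidean_space"
  assumes "finite J" and dual: "\<And>p. \<forall>a\<in>J. a \<bullet> p \<le> 0 \<Longrightarrow> v \<bullet> p \<le> 0"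
  shows "v \<in> convex_cone hull J"
proof (rule ccontr)
  assume "v \<notin> convex_cone hull J"
  then obtain a b where sep: "a \<bullet> v < b" "\<forall>x\<in>convex_cone hull J. b < a \<bullet> x"
    using separating_hyperplane_closed_point[OF convex_convex_cone_hull closed_convex_cone_hull[OF assms(1)]]
    by blast
  then have "b < 0"
    using convex_cone_hull_contains_0 by fastforce
  have "0 \<le> a \<bullet> x" if "x \<in> convex_cone hull J" for x
  proof (rule ccontr)
    assume neg: "\<not> 0 \<le> a \<bullet> x"
    then have "(b / (a \<bullet> x)) *\<^sub>R x \<in> convex_cone hull J"
      using \<open>b < 0\<close> that by (intro convex_cone_hull_mul) (auto simp: zero_le_divide_iff)
    then have "b < a \<bullet> ((b / (a \<bullet> x)) *\<^sub>R x)"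
      using sep(2) by blast
    with neg show False by simp
  qed
  then have "\<forall>c\<in>J. c \<bullet> (-a) \<le> 0"
    by (auto intro: hull_inc simp: inner_commute)
  then have "v \<bullet> (-a) \<le> 0" by (rule dual)
  with sep(1) \<open>b < 0\<close> show False
    by (simp add: inner_commute)
qed

lemma normal_vector_in_active_convex_cone_hull:
  fixes A :: "'a::euclidean_space set"
  assumes "finite A" and y: "\<forall>a\<in>A. a \<bullet> y \<le> 0"
    and normal: "\<And>z. \<forall>a\<in>A. a \<bullet> z \<le> 0 \<Longrightarrow> v \<bullet> (z - y) \<le> 0"
  shows "v \<in> convex_cone hull {a\<in>A. a \<bullet> y = 0}"
proof (rule Farkas_lemma)
  show "finite {a\<in>A. a \<bullet> y = 0}"
    using assms(1) by simp
  fix p assume p: "\<forall>a\<in>{a\<in>A. a \<bullet> y = 0}. a \<bullet> p \<le> 0"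
  have "\<forall>\<^sub>F e in at_right 0. a \<bullet> (y + e *\<^sub>R p) \<le> 0" if "a \<in> A" for a
  proof (cases "a \<bullet> y = 0")
    case True
    with p that show ?thesis
      using eventually_at_right_less[of "0::real"]
      by (auto elim!: eventually_mono simp: inner_add_right mult_nonneg_nonpos)
  next
    case False
    with y that have "a \<bullet> y < 0"
      by force
    moreover have "((\<lambda>e. a \<bullet> (y + e *\<^sub>R p)) \<longlongrightarrow> a \<bullet> y) (at_right 0)"
      by (auto intro!: tendsto_eq_intros)
    ultimately show ?thesis
      by (auto dest: order_tendstoD(2) elim!: eventually_mono)
  qed
  then have "\<forall>\<^sub>F e in at_right 0. 0 < e \<and> (\<forall>a\<in>A. a \<bullet> (y + e *\<^sub>R p) \<le> 0)"
    by (auto intro!: eventually_conj eventually_at_right_less eventually_ball_finite[OF assms(1)])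
  then have "\<exists>e::real. 0 < e \<and> (\<forall>a\<in>A. a \<bullet> (y + e *\<^sub>R p) \<le> 0)"
    by (rule eventually_happens'[OF trivial_limit_at_right_real])
  then obtain e :: real where "0 < e" "\<forall>a\<in>A. a \<bullet> (y + e *\<^sub>R p) \<le> 0"
    by blast
  then have "e * (v \<bullet> p) \<le> 0"
    using normal[of "y + e *\<^sub>R p"] by simp
  with \<open>0 < e\<close> show "v \<bullet> p \<le> 0"
    by (simp add: mult_le_0_iff)
qed

lemma convex_cone_hull_inner_pos:
  assumes "u \<in> convex_cone hull J" "u \<noteq> 0"
  shows "\<exists>a\<in>J. 0 < a \<bullet> u"
proof (rule ccontr)
  assume "\<not> ?thesis"
  then have "J \<subseteq> {z. u \<bullet> z \<le> 0}"
    by (auto simp: inner_commute not_less)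
  then have "convex_cone hull J \<subseteq> {z. u \<bullet> z \<le> 0}"
    by (rule hull_minimal) (rule convex_cone_halfspace_le)
  with assms show False
    by (metis inner_gt_zero_iff mem_Collect_eq not_le subsetD)
qed

lemma bounded_convex_cone_hull_inner_le:
  fixes J :: "'a::euclidean_space set"
  assumes "finite J"
  shows "bounded {v \<in> convex_cone hull J. \<forall>a\<in>J. a \<bullet> v \<le> r}"
proof -
  define f where "f v = (\<Sum>a\<in>J. max 0 (a \<bullet> v))" for v
  let ?S = "convex_cone hull J \<inter> sphere 0 1"
  have f_pos: "0 < f u" if "u \<in> ?S" for u
    using convex_cone_hull_inner_pos[of u J] that assms unfolding f_def
    by (force intro: sum_pos2)
  obtain \<delta> where "0 < \<delta>" and \<delta>: "\<And>u. u \<in> ?S \<Longrightarrow> \<delta> \<le> f u"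
  proof (cases "?S = {}")
    case True
    then show thesis
      using that[of 1] by auto
  next
    case False
    have "compact ?S"
      by (intro closed_Int_compact closed_convex_cone_hull assms compact_sphere)
    moreover have "continuous_on ?S f"
      unfolding f_def by (intro continuous_intros)
    ultimately obtain u0 where "u0 \<in> ?S" "\<And>u. u \<in> ?S \<Longrightarrow> f u0 \<le> f u"
      using continuous_attains_inf[OF _ False] by blast
    then show thesis
      using that[of "f u0"] f_pos by blast
  qed
  have "norm v \<le> card J * max 0 r / \<delta>"
    if v: "v \<in> convex_cone hull J" "\<forall>a\<in>J. a \<bullet> v \<le> r" for v
  proof (cases "v = 0")
    case True
    with \<open>0 < \<delta>\<close> show ?thesis by simp
  next
    case False
    let ?u = "(1 / norm v) *\<^sub>R v"
    have "?u \<in> ?S"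
      using v(1) False by (auto intro: convex_cone_hull_mul)
    then have "norm v * \<delta> \<le> norm v * f ?u"
      using \<delta> by (simp add: mult_left_mono)
    also have "\<dots> = f v"
      unfolding f_def using False by (simp add: sum_distrib_left max_mult_distrib_left)
    also have "\<dots> \<le> card J * max 0 r"
      unfolding f_def using v(2) by (intro sum_bounded_above) auto
    finally show ?thesis
      using \<open>0 < \<delta>\<close> by (simp add: field_simps)
  qed
  then show ?thesis
    by (auto simp: bounded_iff)
qed

lemma Hoffman_bound:
  fixes A :: "'a::euclidean_space set"
  assumes "finite A"
  obtains R where "{x. \<forall>a\<in>A. a \<bullet> x \<le> r} \<subseteq> cball 0 R + {y. \<forall>a\<in>A. a \<bullet> y \<le> 0}"
proof -
  have "\<exists>R. \<forall>v\<in>convex_cone hull J. (\<forall>a\<in>J. a \<bullet> v \<le> r) \<longrightarrow> norm v \<le> R" if "J \<subseteq> A" for J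
    using bounded_convex_cone_hull_inner_le[OF finite_subset[OF that assms], of r]
    unfolding bounded_iff by auto
  then obtain R_of where R_of: "\<And>J v. J \<subseteq> A \<Longrightarrow> v \<in> convex_cone hull J \<Longrightarrow>
      \<forall>a\<in>J. a \<bullet> v \<le> r \<Longrightarrow> norm v \<le> R_of J"
    by metis
  define P where "P = (\<Inter>a\<in>A. {y. a \<bullet> y \<le> 0})"
  have "closed P" "convex P" "0 \<in> P"
    unfolding P_def by (auto intro!: closed_INT convex_INT closed_halfspace_le convex_halfspace_le)
  show thesis
  proof (rule that[of "Max (R_of ` Pow A)"], clarify)
    fix x assume x: "\<forall>a\<in>A. a \<bullet> x \<le> r"
    define y where "y = closest_point P x"
    have "y \<in> P"
      using closest_point_in_set[OF \<open>closed P\<close>] \<open>0 \<in> P\<close> by (auto simp: y_def)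
    have "(x - y) \<bullet> (z - y) \<le> 0" if "z \<in> P" for z
      using any_closest_point_dot[OF \<open>convex P\<close> \<open>closed P\<close> \<open>y \<in> P\<close> that]
        closest_point_exists(2)[OF \<open>closed P\<close>] \<open>0 \<in> P\<close>
      by (auto simp: y_def)
    then have "x - y \<in> convex_cone hull {a\<in>A. a \<bullet> y = 0}"
      using \<open>y \<in> P\<close> by (intro normal_vector_in_active_convex_cone_hull assms) (auto simp: P_def)
    moreover have "\<forall>a\<in>{a\<in>A. a \<bullet> y = 0}. a \<bullet> (x - y) \<le> r"
      using x by (simp add: inner_diff_right)
    ultimately have "norm (x - y) \<le> R_of {a\<in>A. a \<bullet> y = 0}"
      by (intro R_of) auto
    also have "\<dots> \<le> Max (R_of ` Pow A)"
      using assms by (intro Max_ge) auto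
    finally have "x - y \<in> cball 0 (Max (R_of ` Pow A))"
      by (simp add: dist_norm norm_minus_commute)
    with \<open>y \<in> P\<close> show "x \<in> cball 0 (Max (R_of ` Pow A)) + {y. \<forall>a\<in>A. a \<bullet> y \<le> 0}"
      using set_plus_intro[of "x - y" _ y] by (force simp: P_def)
  qed
qed

lemma inner_le_of_mem_plus_halfspaces:
  fixes x :: "'a::real_inner"
  assumes "x \<in> B + {y. \<forall>a\<in>A. a \<bullet> y \<le> 0}" "a \<in> A" "B \<subseteq> cball 0 M"
  shows "a \<bullet> x \<le> norm a * M"
proof -
  obtain b g where "x = b + g" "b \<in> B" "\<forall>a\<in>A. a \<bullet> g \<le> 0"
    using assms(1) by (auto elim: set_plus_elim)
  with assms(2) have "a \<bullet> x \<le> a \<bullet> b"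
    by (simp add: inner_add_right)
  also have "\<dots> \<le> norm a * norm b"
    by (rule norm_cauchy_schwarz)
  also have "\<dots> \<le> norm a * M"
    using \<open>b \<in> B\<close> assms(3) by (intro mult_left_mono) auto
  finally show ?thesis .
qed

theorem lemma3p13:
  fixes \<Gamma> Bk :: "nat \<Rightarrow> 'a::euclidean_space set" and n :: nat
  assumes "\<And>k. k \<in> {1..n} \<Longrightarrow> finitely_generated_cone (\<Gamma> k)"
      and "\<And>k. k \<in> {1..n} \<Longrightarrow> compact (Bk k)"
  shows "\<exists>B::'a set. compact B \<and>
           (\<Inter>k\<in>{1..n}. Bk k + \<Gamma> k) \<subseteq> B + (\<Inter>k\<in>{1..n}. \<Gamma> k)"
proof -
  have "\<forall>k\<in>{1..n}. \<exists>A. finite A \<and> \<Gamma> k = {x. \<forall>a\<in>A. a \<bullet> x \<le> 0}"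
    using finitely_generated_cone_eq_halfspaces assms(1) by blast
  then obtain A where A: "\<forall>k\<in>{1..n}. finite (A k) \<and> \<Gamma> k = {x. \<forall>a\<in>A k. a \<bullet> x \<le> 0}"
    by (rule bchoice[THEN exE])
  define A' where "A' = (\<Union>k\<in>{1..n}. A k)"
  have "finite A'"
    using A by (simp add: A'_def)
  have cone_eq: "(\<Inter>k\<in>{1..n}. \<Gamma> k) = {x. \<forall>a\<in>A'. a \<bullet> x \<le> 0}"
    using A by (auto simp: A'_def)
  have "bounded (\<Union>k\<in>{1..n}. Bk k)"
    using assms(2) by (intro compact_imp_bounded compact_UN) auto
  then obtain M where "0 < M" and M: "(\<Union>k\<in>{1..n}. Bk k) \<subseteq> cball 0 M"
    by (meson bounded_subset_ballD ball_subset_cball order.trans)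
  obtain N where N: "\<And>a. a \<in> A' \<Longrightarrow> norm a \<le> N"
    using finite_imp_bounded[OF \<open>finite A'\<close>] unfolding bounded_iff by blast
  have "(\<Inter>k\<in>{1..n}. Bk k + \<Gamma> k) \<subseteq> {x. \<forall>a\<in>A'. a \<bullet> x \<le> N * M}"
  proof clarify
    fix x a assume x: "x \<in> (\<Inter>k\<in>{1..n}. Bk k + \<Gamma> k)" and "a \<in> A'"
    then obtain k where k: "k \<in> {1..n}" "a \<in> A k"
      by (auto simp: A'_def)
    have "x \<in> Bk k + {y. \<forall>a\<in>A k. a \<bullet> y \<le> 0}"
      using x A k(1) by auto
    moreover have "Bk k \<subseteq> cball 0 M"
      using M k(1) by blast
    ultimately have "a \<bullet> x \<le> norm a * M"
      using k(2) by (intro inner_le_of_mem_plus_halfspaces)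
    also have "\<dots> \<le> N * M"
      using N[OF \<open>a \<in> A'\<close>] \<open>0 < M\<close> by (simp add: mult_right_mono)
    finally show "a \<bullet> x \<le> N * M" .
  qed
  moreover obtain R where "{x. \<forall>a\<in>A'. a \<bullet> x \<le> N * M} \<subseteq> cball 0 R + {y. \<forall>a\<in>A'. a \<bullet> y \<le> 0}"
    using Hoffman_bound[OF \<open>finite A'\<close>] .
  ultimately show ?thesis
    unfolding cone_eq by (intro exI[of _ "cball 0 R"]) auto
qed

end
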